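(* Let $(X,d)$ be a metric space admitting a weak convergence $w$, and let $(G,\rho)$ be a proper metric group acting on $X$ such that the action is isometric, metrically compatible, and weakly compatible. Then $w$ is a weak convergence for $(X,d_{G,\rho})$.
   Context: A convergence $c$ on a set $X$ is a rule assigning at most one point of $X$ as the "limit" of each sequence in $X$, such that whenever a sequence has limit $x$, every subsequence also has limit $x$; we write $x_n\to x$ in $c$. A convergence $w$ on $X$ is a weak convergence for $(X,d)$ if: (W1) whenever $\{x_n\}$ and $y$ in $X$ satisfy $\sup_n d(x_n,y)<\infty$, there are a subsequence $\{n_k\}$ and $x\in X$ with $x_{n_k}\to x$ in $w$; (W2) whenever $x_n\to x$ in $w$, $d(x,y)\le\liminf_n d(x_n,y)$ for all $y\in X$; (W3) whenever $x_n\to x$ in $w$ and $d(x_n,y)\to d(x,y)$ for some $y\in X$, then $d(x_n,x)\to0$. $(G,\rho)$ is a metric group if $\rho$ is a left-invariant metric on the group $G$ whose topology makes $G$ a topological group; it is proper if, in addition, closed $\rho$-bounded sets are compact. The action is isometric if $d(g\cdot x,g\cdot x')=d(x,x')$; it is compatible with a convergence $c$ on $X$ if $x_n\to x$ in $c$ and $g_n\to g$ in $G$ imply $g_n\cdot x_n\to g\cdot x$ in $c$; metrically compatible means compatible with convergence in $d$, weakly compatible means compatible with $w$. The regularized metric is $d_{G,\rho}(x,x'):=\min_{g\in G}\sqrt{\rho^2(g,e)+d^2(x,g\cdot x')}$, where $e$ is the identity of $G$. *)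

theory Defs
  imports "HOL-Analysis.Analysis" "HOL-Algebra.Group"
begin

definition convergence :: "'x set \<Rightarrow> ((nat \<Rightarrow> 'x) \<Rightarrow> 'x \<Rightarrow> bool) \<Rightarrow> bool" where
  "convergence X c \<longleftrightarrow>
     (\<forall>xs x. c xs x \<longrightarrow> (\<forall>n. xs n \<in> X) \<and> x \<in> X) \<and>
     (\<forall>xs x y. c xs x \<and> c xs y \<longrightarrow> x = y) \<and>
     (\<forall>xs x r. c xs x \<and> strict_mono (r :: nat \<Rightarrow> nat) \<longrightarrow> c (xs \<circ> r) x)"

definition weak_convergence ::
  "'x set \<Rightarrow> ('x \<Rightarrow> 'x \<Rightarrow> real) \<Rightarrow> ((nat \<Rightarrow> 'x) \<Rightarrow> 'x \<Rightarrow> bool) \<Rightarrow> bool" where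
  "weak_convergence X d w \<longleftrightarrow>
     convergence X w \<and>
     (\<forall>xs y. (\<forall>n. xs n \<in> X) \<and> y \<in> X \<and> bdd_above (range (\<lambda>n. d (xs n) y)) \<longrightarrow>
        (\<exists>r x. strict_mono (r :: nat \<Rightarrow> nat) \<and> x \<in> X \<and> w (xs \<circ> r) x)) \<and>
     (\<forall>xs x y. w xs x \<and> y \<in> X \<longrightarrow> ereal (d x y) \<le> liminf (\<lambda>n. ereal (d (xs n) y))) \<and>
     (\<forall>xs x y. w xs x \<and> y \<in> X \<and> (\<lambda>n. d (xs n) y) \<longlonglongrightarrow> d x y \<longrightarrow>
        (\<lambda>n. d (xs n) x) \<longlonglongrightarrow> 0)"

definition metric_group :: "('g, 'b) monoid_scheme \<Rightarrow> ('g \<Rightarrow> 'g \<Rightarrow> real) \<Rightarrow> bool" where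
  "metric_group G \<rho> \<longleftrightarrow>
     group G \<and> Metric_space (carrier G) \<rho> \<and>
     (\<forall>g\<in>carrier G. \<forall>h\<in>carrier G. \<forall>h'\<in>carrier G. \<rho> (g \<otimes>\<^bsub>G\<^esub> h) (g \<otimes>\<^bsub>G\<^esub> h') = \<rho> h h') \<and>
     continuous_map
       (prod_topology (Metric_space.mtopology (carrier G) \<rho>) (Metric_space.mtopology (carrier G) \<rho>))
       (Metric_space.mtopology (carrier G) \<rho>) (\<lambda>(g, h). g \<otimes>\<^bsub>G\<^esub> h) \<and>
     continuous_map (Metric_space.mtopology (carrier G) \<rho>) (Metric_space.mtopology (carrier G) \<rho>)
       (\<lambda>g. inv\<^bsub>G\<^esub> g)"

definition proper_metric_group :: "('g, 'b) monoid_scheme \<Rightarrow> ('g \<Rightarrow> 'g \<Rightarrow> real) \<Rightarrow> bool" where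
  "proper_metric_group G \<rho> \<longleftrightarrow>
     metric_group G \<rho> \<and>
     (\<forall>S. closedin (Metric_space.mtopology (carrier G) \<rho>) S \<and> Metric_space.mbounded (carrier G) \<rho> S
          \<longrightarrow> compactin (Metric_space.mtopology (carrier G) \<rho>) S)"

definition group_action_on :: "('g, 'b) monoid_scheme \<Rightarrow> 'x set \<Rightarrow> ('g \<Rightarrow> 'x \<Rightarrow> 'x) \<Rightarrow> bool" where
  "group_action_on G X act \<longleftrightarrow>
     (\<forall>g\<in>carrier G. \<forall>x\<in>X. act g x \<in> X) \<and>
     (\<forall>x\<in>X. act \<one>\<^bsub>G\<^esub> x = x) \<and>
     (\<forall>g\<in>carrier G. \<forall>h\<in>carrier G. \<forall>x\<in>X. act (g \<otimes>\<^bsub>G\<^esub> h) x = act g (act h x))"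

definition isometric_action ::
  "('g, 'b) monoid_scheme \<Rightarrow> 'x set \<Rightarrow> ('x \<Rightarrow> 'x \<Rightarrow> real) \<Rightarrow> ('g \<Rightarrow> 'x \<Rightarrow> 'x) \<Rightarrow> bool" where
  "isometric_action G X d act \<longleftrightarrow>
     (\<forall>g\<in>carrier G. \<forall>x\<in>X. \<forall>x'\<in>X. d (act g x) (act g x') = d x x')"

definition group_conv :: "('g, 'b) monoid_scheme \<Rightarrow> ('g \<Rightarrow> 'g \<Rightarrow> real) \<Rightarrow> (nat \<Rightarrow> 'g) \<Rightarrow> 'g \<Rightarrow> bool" where
  "group_conv G \<rho> gs g \<longleftrightarrow> (\<forall>n. gs n \<in> carrier G) \<and> g \<in> carrier G \<and> (\<lambda>n. \<rho> (gs n) g) \<longlonglongrightarrow> 0"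

definition metric_conv :: "'x set \<Rightarrow> ('x \<Rightarrow> 'x \<Rightarrow> real) \<Rightarrow> (nat \<Rightarrow> 'x) \<Rightarrow> 'x \<Rightarrow> bool" where
  "metric_conv X d xs x \<longleftrightarrow> (\<forall>n. xs n \<in> X) \<and> x \<in> X \<and> (\<lambda>n. d (xs n) x) \<longlonglongrightarrow> 0"

definition compatible_action ::
  "('g, 'b) monoid_scheme \<Rightarrow> ('g \<Rightarrow> 'g \<Rightarrow> real) \<Rightarrow> ('g \<Rightarrow> 'x \<Rightarrow> 'x) \<Rightarrow> ((nat \<Rightarrow> 'x) \<Rightarrow> 'x \<Rightarrow> bool) \<Rightarrow> bool" where
  "compatible_action G \<rho> act c \<longleftrightarrow>
     (\<forall>xs x gs g. c xs x \<and> group_conv G \<rho> gs g \<longrightarrow> c (\<lambda>n. act (gs n) (xs n)) (act g x))"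

text \<open>Regularized metric; the paper writes min, which is attained for proper G, so
  we use the infimum.\<close>
definition regularized_metric ::
  "('g, 'b) monoid_scheme \<Rightarrow> ('g \<Rightarrow> 'g \<Rightarrow> real) \<Rightarrow> ('x \<Rightarrow> 'x \<Rightarrow> real) \<Rightarrow> ('g \<Rightarrow> 'x \<Rightarrow> 'x) \<Rightarrow> 'x \<Rightarrow> 'x \<Rightarrow> real" where
  "regularized_metric G \<rho> d act x x' =
     (INF g\<in>carrier G. sqrt ((\<rho> g \<one>\<^bsub>G\<^esub>)\<^sup>2 + (d x (act g x'))\<^sup>2))"

end

theory Submission
  imports Defs
begin

(*
  Let x_n converge weakly to x and fix y.  Pick g_n almost minimizing d_G(x_n, y).  A bound on
  d_G(x_n, y) bounds rho(g_n, e), so by properness g_n \<rightarrow> g along a subsequence, and by metric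
  compatibility g_n y \<rightarrow> g y; hence d(x_n, g_n y) and d(x_n, g y) converge to a common limit m
  along a further subsequence, with sqrt(rho(g, e)^2 + m^2) \<le> lim d_G(x_n, y).  Now (W1) for d
  applies to the d-bounded sequence x_n, and (W2) for d gives d(x, g y) \<le> m, so
  d_G(x, y) \<le> lim d_G(x_n, y).  In the equality case d(x, g y) = m, so (W3) for d gives
  d(x_n, x) \<rightarrow> 0, which dominates d_G(x_n, x); a sub-subsequence argument upgrades this to the
  whole sequence.
*)

lemma LIMSEQ_if_subseqs_have_LIMSEQ_subseq:
  fixes f :: "nat \<Rightarrow> 'a::topological_space"
  assumes "\<And>r :: nat \<Rightarrow> nat. strict_mono r \<Longrightarrow>
    \<exists>r' :: nat \<Rightarrow> nat. strict_mono r' \<and> (f \<circ> r \<circ> r') \<longlonglongrightarrow> L"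
  shows "f \<longlonglongrightarrow> L"
proof (rule ccontr)
  assume "\<not> f \<longlonglongrightarrow> L"
  then obtain S where S: "open S" "L \<in> S" and "\<not> eventually (\<lambda>n. f n \<in> S) sequentially"
    unfolding tendsto_def by blast
  then have "infinite {n. f n \<notin> S}"
    by (simp add: cofinite_eq_sequentially[symmetric] eventually_cofinite)
  then obtain r :: "nat \<Rightarrow> nat" where r: "strict_mono r" "\<And>n. f (r n) \<notin> S"
    using infinite_enumerate by blast
  obtain r' where "(f \<circ> r \<circ> r') \<longlonglongrightarrow> L"
    using assms[OF r(1)] by blast
  then have "eventually (\<lambda>n. f (r (r' n)) \<in> S) sequentially"
    using S unfolding tendsto_def by auto
  with r(2) show False
    by simp
qed

lemma (in Metric_space) mdist_tendsto_shift:
  assumes "(\<lambda>n. d (b n) (c n)) \<longlonglongrightarrow> 0" "(\<lambda>n. d (a n) (b n)) \<longlonglongrightarrow> m"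
    and "\<And>n. a n \<in> M" "\<And>n. b n \<in> M" "\<And>n. c n \<in> M"
  shows "(\<lambda>n. d (a n) (c n)) \<longlonglongrightarrow> m"
proof -
  have "(\<lambda>n. d (a n) (c n) - d (a n) (b n)) \<longlonglongrightarrow> 0"
  proof (rule Lim_null_comparison[OF always_eventually assms(1)], rule allI)
    fix n
    show "norm (d (a n) (c n) - d (a n) (b n)) \<le> d (b n) (c n)"
      using mdist_reverse_triangle[of "b n" "a n" "c n"] assms(3-5) commute[of "a n" "b n"] by simp
  qed
  from tendsto_add[OF this assms(2)] show ?thesis
    by simp
qed

lemma convergence_in_space:
  assumes "convergence X c" "c xs x"
  shows "xs n \<in> X" "x \<in> X"
  using assms unfolding convergence_def by blast+

lemma convergence_subseq:
  assumes "convergence X c" "c xs x" "strict_mono r"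
  shows "c (xs \<circ> r) x"
  using assms unfolding convergence_def by blast

lemma weak_convergence_imp_convergence: "weak_convergence X d w \<Longrightarrow> convergence X w"
  by (simp add: weak_convergence_def)

lemma weak_convergence_dist_le_lim:
  assumes "weak_convergence X d w" "w xs x" "y \<in> X" "(\<lambda>n. d (xs n) y) \<longlonglongrightarrow> m"
  shows "d x y \<le> m"
proof -
  have "ereal (d x y) \<le> liminf (\<lambda>n. ereal (d (xs n) y))"
    using assms(1-3) unfolding weak_convergence_def by blast
  also have "\<dots> = ereal m"
    using assms(4) by (intro lim_imp_Liminf) auto
  finally show ?thesis
    by simp
qed

lemma weak_convergence_bounded_imp_subseq:
  assumes "weak_convergence X d w" "\<And>n. xs n \<in> X" "y \<in> X" "bdd_above (range (\<lambda>n. d (xs n) y))"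
  shows "\<exists>r x. strict_mono (r :: nat \<Rightarrow> nat) \<and> x \<in> X \<and> w (xs \<circ> r) x"
  using assms unfolding weak_convergence_def by blast

lemma weak_convergence_tendsto_dist:
  assumes "weak_convergence X d w" "w xs x" "y \<in> X" "(\<lambda>n. d (xs n) y) \<longlonglongrightarrow> d x y"
  shows "(\<lambda>n. d (xs n) x) \<longlonglongrightarrow> 0"
  using assms unfolding weak_convergence_def by blast

lemma weak_convergenceI:
  assumes "convergence X w"
    and "\<And>xs y. (\<And>n. xs n \<in> X) \<Longrightarrow> y \<in> X \<Longrightarrow> bdd_above (range (\<lambda>n. d (xs n) y)) \<Longrightarrow>
      \<exists>r x. strict_mono (r :: nat \<Rightarrow> nat) \<and> x \<in> X \<and> w (xs \<circ> r) x"
    and "\<And>xs x y. w xs x \<Longrightarrow> y \<in> X \<Longrightarrow> ereal (d x y) \<le> liminf (\<lambda>n. ereal (d (xs n) y))"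
    and "\<And>xs x y. w xs x \<Longrightarrow> y \<in> X \<Longrightarrow> (\<lambda>n. d (xs n) y) \<longlonglongrightarrow> d x y \<Longrightarrow>
      (\<lambda>n. d (xs n) x) \<longlonglongrightarrow> 0"
  shows "weak_convergence X d w"
  unfolding weak_convergence_def using assms by auto

lemma proper_metric_group_imp_group: "proper_metric_group G \<rho> \<Longrightarrow> group G"
  by (simp add: proper_metric_group_def metric_group_def)

lemma proper_metric_group_imp_Metric_space:
  "proper_metric_group G \<rho> \<Longrightarrow> Metric_space (carrier G) \<rho>"
  by (simp add: proper_metric_group_def metric_group_def)

lemma proper_metric_group_bounded_imp_convergent_subseq:
  fixes gs :: "nat \<Rightarrow> 'g"
  assumes "proper_metric_group G \<rho>" "\<And>n. gs n \<in> carrier G" "\<And>n. \<rho> (gs n) \<one>\<^bsub>G\<^esub> \<le> R"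
  shows "\<exists>s g. strict_mono s \<and> group_conv G \<rho> (gs \<circ> s) g"
proof -
  have proper: "\<And>S. closedin (Metric_space.mtopology (carrier G) \<rho>) S \<Longrightarrow>
      Metric_space.mbounded (carrier G) \<rho> S \<Longrightarrow> compactin (Metric_space.mtopology (carrier G) \<rho>) S"
    using assms(1) unfolding proper_metric_group_def by blast
  interpret Metric_space "carrier G" \<rho>
    using assms(1) by (rule proper_metric_group_imp_Metric_space)
  have one: "\<one>\<^bsub>G\<^esub> \<in> carrier G"
    using proper_metric_group_imp_group[OF assms(1)]
    by (simp add: group.is_monoid monoid.one_closed)
  have "compactin mtopology (mcball \<one>\<^bsub>G\<^esub> R)"
    by (intro proper closedin_mcball mbounded_mcball)
  moreover have "range gs \<subseteq> mcball \<one>\<^bsub>G\<^esub> R"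
  proof clarify
    fix n
    show "gs n \<in> mcball \<one>\<^bsub>G\<^esub> R"
      using assms(2,3)[of n] one commute[of "gs n" "\<one>\<^bsub>G\<^esub>"] by simp
  qed
  ultimately obtain g s where "g \<in> mcball \<one>\<^bsub>G\<^esub> R" "strict_mono s"
      "limitin mtopology (gs \<circ> s) g sequentially"
    unfolding compactin_sequentially by blast
  then show ?thesis
    unfolding group_conv_def limitin_metric_dist_null using assms(2) by (auto simp: o_def)
qed

lemma metric_compatible_orbit_tendsto:
  assumes "Metric_space X d" "compatible_action G \<rho> act (metric_conv X d)"
    and "group_conv G \<rho> gs g" "y \<in> X"
  shows "(\<lambda>n. d (act (gs n) y) (act g y)) \<longlonglongrightarrow> 0"
proof -
  have "metric_conv X d (\<lambda>_. y) y"
    using assms(1,4) Metric_space.mdist_zero by (fastforce simp: metric_conv_def)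
  then have "metric_conv X d (\<lambda>n. act (gs n) y) (act g y)"
    using assms(2,3) unfolding compatible_action_def by blast
  then show ?thesis
    by (simp add: metric_conv_def)
qed

locale proper_metric_action =
  fixes X :: "'x set" and d :: "'x \<Rightarrow> 'x \<Rightarrow> real"
    and G :: "('g, 'b) monoid_scheme" and \<rho> :: "'g \<Rightarrow> 'g \<Rightarrow> real"
    and act :: "'g \<Rightarrow> 'x \<Rightarrow> 'x"
  assumes space: "Metric_space X d"
    and proper: "proper_metric_group G \<rho>"
    and action: "group_action_on G X act"
    and metric_compatible: "compatible_action G \<rho> act (metric_conv X d)"
begin

sublocale X: Metric_space X d
  by (rule space)

sublocale G: Metric_space "carrier G" \<rho>
  using proper by (rule proper_metric_group_imp_Metric_space)

abbreviation d\<^sub>G :: "'x \<Rightarrow> 'x \<Rightarrow> real" where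
  "d\<^sub>G \<equiv> regularized_metric G \<rho> d act"

lemma one_closed: "\<one>\<^bsub>G\<^esub> \<in> carrier G"
  using proper_metric_group_imp_group[OF proper] by (simp add: group.is_monoid monoid.one_closed)

lemma act_closed: "g \<in> carrier G \<Longrightarrow> x \<in> X \<Longrightarrow> act g x \<in> X"
  using action unfolding group_action_on_def by blast

lemma act_one: "x \<in> X \<Longrightarrow> act \<one>\<^bsub>G\<^esub> x = x"
  using action unfolding group_action_on_def by blast

lemma regularized_metric_bdd_below:
  "bdd_below ((\<lambda>g. sqrt ((\<rho> g \<one>\<^bsub>G\<^esub>)\<^sup>2 + (d a (act g b))\<^sup>2)) ` carrier G)"
  by (rule bdd_belowI[where m = 0]) auto

lemma regularized_metric_le:
  "g \<in> carrier G \<Longrightarrow> d\<^sub>G a b \<le> sqrt ((\<rho> g \<one>\<^bsub>G\<^esub>)\<^sup>2 + (d a (act g b))\<^sup>2)"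
  unfolding regularized_metric_def by (rule cINF_lower[OF regularized_metric_bdd_below])

lemma regularized_metric_nonneg: "0 \<le> d\<^sub>G a b"
  unfolding regularized_metric_def using one_closed by (intro cINF_greatest) auto

lemma regularized_metric_le_dist: "a \<in> X \<Longrightarrow> b \<in> X \<Longrightarrow> d\<^sub>G a b \<le> d a b"
  using regularized_metric_le[OF one_closed, of a b] one_closed act_one by simp

lemma regularized_metric_approx:
  assumes "0 < e"
  shows "\<exists>g\<in>carrier G. sqrt ((\<rho> g \<one>\<^bsub>G\<^esub>)\<^sup>2 + (d a (act g b))\<^sup>2) < d\<^sub>G a b + e"
proof -
  have "d\<^sub>G a b < d\<^sub>G a b + e"
    using assms by simp
  then show ?thesis
    unfolding regularized_metric_def
    using cINF_less_iff[OF _ regularized_metric_bdd_below] one_closed by blast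
qed

lemma almost_minimizers_convergent_subseq:
  fixes xs :: "nat \<Rightarrow> 'x" and gs :: "nat \<Rightarrow> 'g"
  assumes xs: "\<And>n. xs n \<in> X" and y: "y \<in> X" and gs: "\<And>n. gs n \<in> carrier G"
    and bound_\<rho>: "\<And>n. \<rho> (gs n) \<one>\<^bsub>G\<^esub> \<le> R" and bound_d: "\<And>n. d (xs n) (act (gs n) y) \<le> R"
  shows "\<exists>r g m. strict_mono r \<and> g \<in> carrier G \<and>
    (\<lambda>n. \<rho> (gs (r n)) \<one>\<^bsub>G\<^esub>) \<longlonglongrightarrow> \<rho> g \<one>\<^bsub>G\<^esub> \<and>
    (\<lambda>n. d (xs (r n)) (act (gs (r n)) y)) \<longlonglongrightarrow> m \<and>
    (\<lambda>n. d (xs (r n)) (act g y)) \<longlonglongrightarrow> m"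
proof -
  obtain s g where s: "strict_mono s" and gs_conv: "group_conv G \<rho> (gs \<circ> s) g"
    using proper_metric_group_bounded_imp_convergent_subseq[OF proper, of gs R] gs bound_\<rho> by blast
  have g: "g \<in> carrier G" and \<rho>_tendsto: "(\<lambda>n. \<rho> (gs (s n)) g) \<longlonglongrightarrow> 0"
    using gs_conv by (simp_all add: group_conv_def)
  have orbit_tendsto: "(\<lambda>n. d (act (gs (s n)) y) (act g y)) \<longlonglongrightarrow> 0"
    using metric_compatible_orbit_tendsto[OF space metric_compatible gs_conv y] by simp
  have "\<bar>d (xs (s n)) (act (gs (s n)) y)\<bar> \<le> R" for n
    using bound_d by simp
  then have "bounded (range (\<lambda>n. d (xs (s n)) (act (gs (s n)) y)))"
    unfolding bounded_real by blast
  then obtain t m where t: "strict_mono t"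
    and m: "((\<lambda>n. d (xs (s n)) (act (gs (s n)) y)) \<circ> t) \<longlonglongrightarrow> m"
    using bounded_imp_convergent_subsequence by blast
  define r where "r = s \<circ> t"
  have "(\<lambda>n. \<rho> g (gs (r n))) \<longlonglongrightarrow> 0"
    using LIMSEQ_subseq_LIMSEQ[OF \<rho>_tendsto t] by (simp add: r_def o_def G.commute[of g])
  then have "(\<lambda>n. \<rho> \<one>\<^bsub>G\<^esub> (gs (r n))) \<longlonglongrightarrow> \<rho> \<one>\<^bsub>G\<^esub> g"
    by (rule G.mdist_tendsto_shift[OF _ tendsto_const]) (simp_all add: one_closed g gs)
  then have \<rho>_conv: "(\<lambda>n. \<rho> (gs (r n)) \<one>\<^bsub>G\<^esub>) \<longlonglongrightarrow> \<rho> g \<one>\<^bsub>G\<^esub>"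
    by (simp add: G.commute[of "\<one>\<^bsub>G\<^esub>"])
  have d_conv: "(\<lambda>n. d (xs (r n)) (act (gs (r n)) y)) \<longlonglongrightarrow> m"
    using m by (simp add: r_def o_def)
  have "(\<lambda>n. d (act (gs (r n)) y) (act g y)) \<longlonglongrightarrow> 0"
    using LIMSEQ_subseq_LIMSEQ[OF orbit_tendsto t] by (simp add: r_def o_def)
  then have "(\<lambda>n. d (xs (r n)) (act g y)) \<longlonglongrightarrow> m"
    by (rule X.mdist_tendsto_shift[OF _ d_conv]) (simp_all add: xs y gs g act_closed)
  with \<rho>_conv d_conv show ?thesis
    using strict_mono_o[OF s t] g unfolding r_def by blast
qed

lemma regularized_metric_tendsto_witness:
  fixes xs :: "nat \<Rightarrow> 'x"
  assumes xs: "\<And>n. xs n \<in> X" and y: "y \<in> X" and lim: "(\<lambda>n. d\<^sub>G (xs n) y) \<longlonglongrightarrow> l"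
  shows "\<exists>r g m. strict_mono r \<and> g \<in> carrier G \<and> (\<lambda>n. d (xs (r n)) (act g y)) \<longlonglongrightarrow> m \<and>
    sqrt ((\<rho> g \<one>\<^bsub>G\<^esub>)\<^sup>2 + m\<^sup>2) \<le> l"
proof -
  define e :: "nat \<Rightarrow> real" where "e n = inverse (real (Suc n))" for n
  have e_pos: "0 < e n" and e_le_1: "e n \<le> 1" for n
    by (simp_all add: e_def inverse_le_1_iff)
  have e_tendsto: "e \<longlonglongrightarrow> 0"
    unfolding e_def by (rule LIMSEQ_inverse_real_of_nat)
  have "\<forall>n. \<exists>g. g \<in> carrier G \<and>
      sqrt ((\<rho> g \<one>\<^bsub>G\<^esub>)\<^sup>2 + (d (xs n) (act g y))\<^sup>2) < d\<^sub>G (xs n) y + e n"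
    using regularized_metric_approx[OF e_pos] by blast
  then obtain gs where gs: "\<And>n. gs n \<in> carrier G" and gs_approx:
      "\<And>n. sqrt ((\<rho> (gs n) \<one>\<^bsub>G\<^esub>)\<^sup>2 + (d (xs n) (act (gs n) y))\<^sup>2) < d\<^sub>G (xs n) y + e n"
    by (metis choice)
  obtain B where B: "\<And>n. d\<^sub>G (xs n) y \<le> B"
    using bounded_imp_bdd_above[OF convergent_imp_bounded[OF lim]] by (auto simp: bdd_above_def)
  have "\<rho> (gs n) \<one>\<^bsub>G\<^esub> \<le> B + 1" "d (xs n) (act (gs n) y) \<le> B + 1" for n
    using real_sqrt_sum_squares_ge1[of "\<rho> (gs n) \<one>\<^bsub>G\<^esub>" "d (xs n) (act (gs n) y)"]
      real_sqrt_sum_squares_ge2[where x = "\<rho> (gs n) \<one>\<^bsub>G\<^esub>" and y = "d (xs n) (act (gs n) y)"]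
      gs_approx[of n] B[of n] e_le_1[of n]
    by linarith+
  then obtain r g m where r: "strict_mono r" and g: "g \<in> carrier G"
    and \<rho>_conv: "(\<lambda>n. \<rho> (gs (r n)) \<one>\<^bsub>G\<^esub>) \<longlonglongrightarrow> \<rho> g \<one>\<^bsub>G\<^esub>"
    and d_conv: "(\<lambda>n. d (xs (r n)) (act (gs (r n)) y)) \<longlonglongrightarrow> m"
    and m_conv: "(\<lambda>n. d (xs (r n)) (act g y)) \<longlonglongrightarrow> m"
    using almost_minimizers_convergent_subseq[of xs y gs "B + 1"] xs y gs by blast
  have "(\<lambda>n. sqrt ((\<rho> (gs (r n)) \<one>\<^bsub>G\<^esub>)\<^sup>2 + (d (xs (r n)) (act (gs (r n)) y))\<^sup>2))
      \<longlonglongrightarrow> sqrt ((\<rho> g \<one>\<^bsub>G\<^esub>)\<^sup>2 + m\<^sup>2)"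
    by (intro tendsto_intros \<rho>_conv d_conv)
  moreover have "(\<lambda>n. d\<^sub>G (xs (r n)) y + e (r n)) \<longlonglongrightarrow> l"
    using tendsto_add[OF LIMSEQ_subseq_LIMSEQ[OF lim r] LIMSEQ_subseq_LIMSEQ[OF e_tendsto r]]
    by (simp add: o_def)
  ultimately have "sqrt ((\<rho> g \<one>\<^bsub>G\<^esub>)\<^sup>2 + m\<^sup>2) \<le> l"
    by (rule LIMSEQ_le) (auto intro: less_imp_le gs_approx)
  with r g m_conv show ?thesis
    by blast
qed

end

locale weak_proper_metric_action = proper_metric_action X d G \<rho> act
  for X :: "'x set" and d and G :: "('g, 'b) monoid_scheme" and \<rho> and act +
  fixes w :: "(nat \<Rightarrow> 'x) \<Rightarrow> 'x \<Rightarrow> bool"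
  assumes weak: "weak_convergence X d w"
begin

lemma weak_limit_in_space: "w xs x \<Longrightarrow> xs n \<in> X" "w xs x \<Longrightarrow> x \<in> X"
  using convergence_in_space[OF weak_convergence_imp_convergence[OF weak]] by blast+

lemma weak_limit_subseq: "w xs x \<Longrightarrow> strict_mono r \<Longrightarrow> w (xs \<circ> r) x"
  using convergence_subseq[OF weak_convergence_imp_convergence[OF weak]] .

lemma regularized_metric_le_lim:
  fixes xs :: "nat \<Rightarrow> 'x"
  assumes wx: "w xs x" and y: "y \<in> X" and lim: "(\<lambda>n. d\<^sub>G (xs n) y) \<longlonglongrightarrow> l"
  shows "d\<^sub>G x y \<le> l"
    and "d\<^sub>G x y = l \<Longrightarrow> \<exists>r. strict_mono r \<and> (\<lambda>n. d (xs (r n)) x) \<longlonglongrightarrow> 0"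
proof -
  obtain r g m where r: "strict_mono r" and g: "g \<in> carrier G"
    and m_conv: "(\<lambda>n. d (xs (r n)) (act g y)) \<longlonglongrightarrow> m" and bound: "sqrt ((\<rho> g \<one>\<^bsub>G\<^esub>)\<^sup>2 + m\<^sup>2) \<le> l"
    using regularized_metric_tendsto_witness[OF weak_limit_in_space(1)[OF wx] y lim] by blast
  have wr: "w (xs \<circ> r) x"
    using weak_limit_subseq[OF wx r] .
  have gy: "act g y \<in> X"
    using act_closed[OF g y] .
  have dm: "d x (act g y) \<le> m"
    using weak_convergence_dist_le_lim[OF weak wr gy] m_conv by (simp add: o_def)
  have le_gy: "d\<^sub>G x y \<le> sqrt ((\<rho> g \<one>\<^bsub>G\<^esub>)\<^sup>2 + (d x (act g y))\<^sup>2)"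
    by (rule regularized_metric_le[OF g])
  also have "\<dots> \<le> sqrt ((\<rho> g \<one>\<^bsub>G\<^esub>)\<^sup>2 + m\<^sup>2)"
    using dm by (simp add: power_mono)
  finally show "d\<^sub>G x y \<le> l"
    using bound by linarith
  show "\<exists>r. strict_mono r \<and> (\<lambda>n. d (xs (r n)) x) \<longlonglongrightarrow> 0" if "d\<^sub>G x y = l"
  proof -
    have "sqrt ((\<rho> g \<one>\<^bsub>G\<^esub>)\<^sup>2 + m\<^sup>2) \<le> sqrt ((\<rho> g \<one>\<^bsub>G\<^esub>)\<^sup>2 + (d x (act g y))\<^sup>2)"
      using le_gy bound that by linarith
    then have "m\<^sup>2 \<le> (d x (act g y))\<^sup>2"
      by simp
    then have "d x (act g y) = m"
      using power2_le_imp_le[OF _ X.nonneg] dm by (simp add: order_antisym)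
    then have "(\<lambda>n. d ((xs \<circ> r) n) (act g y)) \<longlonglongrightarrow> d x (act g y)"
      using m_conv by (simp add: o_def)
    from weak_convergence_tendsto_dist[OF weak wr gy this] r show ?thesis
      by (auto simp: o_def)
  qed
qed

lemma regularized_metric_bounded_imp_weak_subseq:
  fixes xs :: "nat \<Rightarrow> 'x"
  assumes xs: "\<And>n. xs n \<in> X" and y: "y \<in> X" and bdd: "bdd_above (range (\<lambda>n. d\<^sub>G (xs n) y))"
  shows "\<exists>r x. strict_mono (r :: nat \<Rightarrow> nat) \<and> x \<in> X \<and> w (xs \<circ> r) x"
proof -
  obtain B where "\<And>n. d\<^sub>G (xs n) y \<le> B"
    using bdd by (auto simp: bdd_above_def)
  then have "bounded (range (\<lambda>n. d\<^sub>G (xs n) y))"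
    unfolding bounded_real by (intro exI[of _ B]) (auto simp: regularized_metric_nonneg)
  then obtain s l where s: "strict_mono s" and "((\<lambda>n. d\<^sub>G (xs n) y) \<circ> s) \<longlonglongrightarrow> l"
    using bounded_imp_convergent_subsequence by blast
  then obtain r g m where r: "strict_mono r" and g: "g \<in> carrier G"
    and m_conv: "(\<lambda>n. d (xs (s (r n))) (act g y)) \<longlonglongrightarrow> m"
    using regularized_metric_tendsto_witness[of "xs \<circ> s" y l] xs y by (auto simp: o_def)
  have "bdd_above (range (\<lambda>n. d ((xs \<circ> (s \<circ> r)) n) (act g y)))"
    using bounded_imp_bdd_above[OF convergent_imp_bounded[OF m_conv]] by (simp add: o_def)
  moreover have "\<And>n. (xs \<circ> (s \<circ> r)) n \<in> X"
    using xs by simp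
  ultimately obtain r' x where "strict_mono r'" "x \<in> X" "w (xs \<circ> (s \<circ> r) \<circ> r') x"
    using weak_convergence_bounded_imp_subseq[OF weak _ act_closed[OF g y]] by blast
  then show ?thesis
    using strict_mono_o[OF strict_mono_o[OF s r]] by (metis o_assoc)
qed

lemma regularized_metric_le_liminf:
  assumes wx: "w xs x" and y: "y \<in> X"
  shows "ereal (d\<^sub>G x y) \<le> liminf (\<lambda>n. ereal (d\<^sub>G (xs n) y))"
proof -
  let ?u = "\<lambda>n. ereal (d\<^sub>G (xs n) y)"
  obtain r where r: "strict_mono r" and lim: "(?u \<circ> r) \<longlonglongrightarrow> liminf ?u"
    using liminf_subseq_lim by blast
  have "0 \<le> liminf ?u"
    using lim by (rule LIMSEQ_le_const) (simp add: regularized_metric_nonneg)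
  then show ?thesis
  proof (cases "liminf ?u")
    case (real l)
    then have "(\<lambda>n. d\<^sub>G ((xs \<circ> r) n) y) \<longlonglongrightarrow> l"
      using lim by (simp add: o_def)
    with real show ?thesis
      using regularized_metric_le_lim(1)[OF weak_limit_subseq[OF wx r] y]
      by simp
  qed simp_all
qed

lemma regularized_metric_tendsto_zero:
  assumes wx: "w xs x" and y: "y \<in> X" and lim: "(\<lambda>n. d\<^sub>G (xs n) y) \<longlonglongrightarrow> d\<^sub>G x y"
  shows "(\<lambda>n. d\<^sub>G (xs n) x) \<longlonglongrightarrow> 0"
proof (rule LIMSEQ_if_subseqs_have_LIMSEQ_subseq)
  fix r :: "nat \<Rightarrow> nat"
  assume r: "strict_mono r"
  have "(\<lambda>n. d\<^sub>G ((xs \<circ> r) n) y) \<longlonglongrightarrow> d\<^sub>G x y"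
    using LIMSEQ_subseq_LIMSEQ[OF lim r] by (simp add: o_def)
  then obtain r' where r': "strict_mono r'" and d_conv: "(\<lambda>n. d ((xs \<circ> r) (r' n)) x) \<longlonglongrightarrow> 0"
    using regularized_metric_le_lim(2)[OF weak_limit_subseq[OF wx r] y]
    by blast
  have "(\<lambda>n. d\<^sub>G ((xs \<circ> r) (r' n)) x) \<longlonglongrightarrow> 0"
  proof (rule tendsto_sandwich[OF _ _ tendsto_const d_conv])
    show "\<forall>\<^sub>F n in sequentially. 0 \<le> d\<^sub>G ((xs \<circ> r) (r' n)) x"
      by (simp add: regularized_metric_nonneg)
    show "\<forall>\<^sub>F n in sequentially. d\<^sub>G ((xs \<circ> r) (r' n)) x \<le> d ((xs \<circ> r) (r' n)) x"
      using weak_limit_in_space[OF wx] by (simp add: regularized_metric_le_dist)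
  qed
  with r' show "\<exists>r'. strict_mono r' \<and> ((\<lambda>n. d\<^sub>G (xs n) x) \<circ> r \<circ> r') \<longlonglongrightarrow> 0"
    by (auto simp: o_def)
qed

end

theorem proposition2p11:
  fixes X :: "'x set" and d :: "'x \<Rightarrow> 'x \<Rightarrow> real"
    and w :: "(nat \<Rightarrow> 'x) \<Rightarrow> 'x \<Rightarrow> bool"
    and G :: "('g, 'b) monoid_scheme" and \<rho> :: "'g \<Rightarrow> 'g \<Rightarrow> real"
    and act :: "'g \<Rightarrow> 'x \<Rightarrow> 'x"
  assumes "Metric_space X d"
    and "weak_convergence X d w"
    and "proper_metric_group G \<rho>"
    and "group_action_on G X act"
    and "isometric_action G X d act"
    and "compatible_action G \<rho> act (metric_conv X d)"
    and "compatible_action G \<rho> act w"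
  shows "weak_convergence X (regularized_metric G \<rho> d act) w"
proof -
  interpret weak_proper_metric_action X d G \<rho> act w
    using assms by (simp add: weak_proper_metric_action_def weak_proper_metric_action_axioms_def
        proper_metric_action_def)
  show ?thesis
    by (rule weak_convergenceI[OF weak_convergence_imp_convergence[OF weak]
          regularized_metric_bounded_imp_weak_subseq regularized_metric_le_liminf
          regularized_metric_tendsto_zero])
qed

end
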